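(* For every even integer $k\geq 2$ there is an undirected graph $G$ with degeneracy at most $k$, $n(G)=\frac{(k+2)k}{2}+1$ and $f(G)=\frac{k^2}{2}$.
   Context: All graphs are finite and simple. $n(G)$ is the number of vertices and $f(G)$ is the minimum size of a feedback vertex set of $G$ (a set $F\subseteq V(G)$ with $G-F$ acyclic). An ordering $\phi$ of $V(G)$ is a $k$-elimination ordering if each vertex has at most $k$ neighbours preceding it in $\phi$; the degeneracy of $G$ is the least $k$ such that $G$ has a $k$-elimination ordering. *)

theory Defs
  imports Main
begin

definition simple_graph :: "'a set \<Rightarrow> 'a set set \<Rightarrow> bool" where
  "simple_graph V E \<longleftrightarrow> finite V \<and>
     (\<forall>e\<in>E. \<exists>u v. u \<noteq> v \<and> u \<in> V \<and> v \<in> V \<and> e = {u, v})"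

definition is_cycle :: "'a set \<Rightarrow> 'a set set \<Rightarrow> 'a list \<Rightarrow> bool" where
  "is_cycle V E cs \<longleftrightarrow> length cs \<ge> 3 \<and> distinct cs \<and> set cs \<subseteq> V \<and>
     (\<forall>i < length cs. {cs ! i, cs ! ((i + 1) mod length cs)} \<in> E)"

definition acyclic_graph :: "'a set \<Rightarrow> 'a set set \<Rightarrow> bool" where
  "acyclic_graph V E \<longleftrightarrow> \<not> (\<exists>cs. is_cycle V E cs)"

definition delete_vertices :: "'a set set \<Rightarrow> 'a set \<Rightarrow> 'a set set" where
  "delete_vertices E F = {e \<in> E. e \<inter> F = {}}"

definition is_fvs :: "'a set \<Rightarrow> 'a set set \<Rightarrow> 'a set \<Rightarrow> bool" where
  "is_fvs V E F \<longleftrightarrow> F \<subseteq> V \<and> acyclic_graph (V - F) (delete_vertices E F)"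

definition fvs_number :: "'a set \<Rightarrow> 'a set set \<Rightarrow> nat" where
  "fvs_number V E = (LEAST n. \<exists>F. is_fvs V E F \<and> card F = n)"

definition is_elim_ordering :: "'a set \<Rightarrow> 'a set set \<Rightarrow> nat \<Rightarrow> 'a list \<Rightarrow> bool" where
  "is_elim_ordering V E k xs \<longleftrightarrow> distinct xs \<and> set xs = V \<and>
     (\<forall>i < length xs. card {j. j < i \<and> {xs ! j, xs ! i} \<in> E} \<le> k)"

definition degeneracy :: "'a set \<Rightarrow> 'a set set \<Rightarrow> nat" where
  "degeneracy V E = (LEAST k. \<exists>xs. is_elim_ordering V E k xs)"

end

theory Submission
  imports Defs
begin

text \<open>Let \<open>k = 2m\<close> and \<open>K = k + 2\<close>. Take \<open>m\<close> blocks of \<open>K\<close> vertices, each a clique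
  minus the edge between its first vertex (its hub) and its last one, add one further hub,
  join all \<open>m + 1\<close> hubs into a clique, and join the last vertex of every block to all later
  hubs. Listing the vertices in their natural order, every vertex has at most \<open>k\<close> earlier
  neighbours. Two vertices at positions 1 and 2 of each block together with the last hub
  induce a matching on \<open>k + 1\<close> vertices. Conversely, an induced forest contains at most two
  hubs and at most two non-hubs per block, so \<open>k + 2\<close> vertices would force two hubs and
  two non-hubs in the block of the lower hub, giving a triangle or a 4-cycle through the last
  vertex of that block. Hence \<open>f(G) = n(G) - (k + 1) = k\<^sup>2 / 2\<close>.\<close>

lemma is_cycle_triangle:
  assumes "distinct [a, b, c]" "{a, b, c} \<subseteq> V" "{a, b} \<in> E" "{b, c} \<in> E" "{c, a} \<in> E"
  shows "is_cycle V E [a, b, c]"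
  unfolding is_cycle_def
proof (intro conjI allI impI)
  fix i assume "i < length [a, b, c]"
  then have "i = 0 \<or> i = 1 \<or> i = 2" by auto
  then show "{[a, b, c] ! i, [a, b, c] ! ((i + 1) mod length [a, b, c])} \<in> E"
    using assms by auto
qed (use assms in auto)

lemma is_cycle_square:
  assumes "distinct [a, b, c, d]" "{a, b, c, d} \<subseteq> V"
    and "{a, b} \<in> E" "{b, c} \<in> E" "{c, d} \<in> E" "{d, a} \<in> E"
  shows "is_cycle V E [a, b, c, d]"
  unfolding is_cycle_def
proof (intro conjI allI impI)
  fix i assume "i < length [a, b, c, d]"
  then have "i = 0 \<or> i = 1 \<or> i = 2 \<or> i = 3" by auto
  then show "{[a, b, c, d] ! i, [a, b, c, d] ! ((i + 1) mod length [a, b, c, d])} \<in> E"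
    using assms by auto
qed (use assms in auto)

lemma acyclic_graph_if_unique_neighbour:
  assumes "\<And>v a b. v \<in> V \<Longrightarrow> a \<in> V \<Longrightarrow> b \<in> V \<Longrightarrow> {v, a} \<in> E \<Longrightarrow> {v, b} \<in> E \<Longrightarrow> a = b"
  shows "acyclic_graph V E"
  unfolding acyclic_graph_def
proof
  assume "\<exists>cs. is_cycle V E cs"
  then obtain cs where len: "length cs \<ge> 3" and "distinct cs" "set cs \<subseteq> V"
    and edge: "\<And>i. i < length cs \<Longrightarrow> {cs ! i, cs ! ((i + 1) mod length cs)} \<in> E"
    unfolding is_cycle_def by blast
  have "cs \<noteq> []"
    using len by auto
  have in_V: "cs ! 0 \<in> V" "cs ! 1 \<in> V" "cs ! 2 \<in> V"
    using len \<open>set cs \<subseteq> V\<close> by (auto intro!: subsetD[OF \<open>set cs \<subseteq> V\<close>] nth_mem)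
  have "{cs ! 1, cs ! 0} \<in> E"
    using edge[of 0] len \<open>cs \<noteq> []\<close> by (simp add: insert_commute)
  moreover have "{cs ! 1, cs ! 2} \<in> E"
    using edge[of 1] len by (simp add: numeral_2_eq_2)
  ultimately have "cs ! 0 = cs ! 2"
    using assms[OF in_V(2,1,3)] by simp
  with nth_eq_iff_index_eq[OF \<open>distinct cs\<close>, of 0 2] len \<open>cs \<noteq> []\<close> show False
    by simp
qed

lemma is_cycle_delete_vertices_iff:
  "is_cycle (V - F) (delete_vertices E F) cs \<longleftrightarrow> is_cycle (V - F) E cs"
proof
  assume cyc: "is_cycle (V - F) E cs"
  have "{cs ! i, cs ! ((i + 1) mod length cs)} \<in> delete_vertices E F" if "i < length cs" for i
  proof -
    have "(i + 1) mod length cs < length cs"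
      using that by (metis mod_less_divisor not_less_zero gr0I)
    then have "cs ! i \<notin> F" "cs ! ((i + 1) mod length cs) \<notin> F"
      using that cyc nth_mem unfolding is_cycle_def by blast+
    then show ?thesis
      using cyc that unfolding is_cycle_def delete_vertices_def by simp
  qed
  with cyc show "is_cycle (V - F) (delete_vertices E F) cs"
    unfolding is_cycle_def by blast
qed (auto simp: is_cycle_def delete_vertices_def)

lemma is_fvs_iff: "is_fvs V E F \<longleftrightarrow> F \<subseteq> V \<and> acyclic_graph (V - F) E"
  by (simp add: is_fvs_def acyclic_graph_def is_cycle_delete_vertices_iff)

lemma card_clique_le_2_if_acyclic:
  assumes "acyclic_graph V E" "A \<subseteq> V"
    and clique: "\<And>a b. a \<in> A \<Longrightarrow> b \<in> A \<Longrightarrow> a \<noteq> b \<Longrightarrow> {a, b} \<in> E"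
  shows "card A \<le> 2"
proof (rule ccontr)
  assume "\<not> card A \<le> 2"
  then obtain T where "T \<subseteq> A" "card T = 3"
    by (metis not_less_eq_eq numeral_2_eq_2 numeral_3_eq_3 obtain_subset_with_card_n)
  then obtain a b c where "T = {a, b, c}" "distinct [a, b, c]"
    by (auto simp: card_3_iff)
  then have "is_cycle V E [a, b, c]"
    using \<open>T \<subseteq> A\<close> \<open>A \<subseteq> V\<close> clique by (intro is_cycle_triangle) auto
  with assms(1) show False
    unfolding acyclic_graph_def by blast
qed

lemma fvs_number_eq_card_minus_max_forest:
  assumes "finite V" "W \<subseteq> V" "acyclic_graph W E"
    and max: "\<And>S. S \<subseteq> V \<Longrightarrow> acyclic_graph S E \<Longrightarrow> card S \<le> card W"
  shows "fvs_number V E = card V - card W"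
  unfolding fvs_number_def
proof (rule Least_equality)
  have "V - (V - W) = W"
    using \<open>W \<subseteq> V\<close> by blast
  then have "is_fvs V E (V - W)"
    using \<open>acyclic_graph W E\<close> by (simp add: is_fvs_iff)
  moreover have "card (V - W) = card V - card W"
    using assms(1,2) by (simp add: card_Diff_subset finite_subset)
  ultimately show "\<exists>F. is_fvs V E F \<and> card F = card V - card W"
    by blast
next
  fix c assume "\<exists>F. is_fvs V E F \<and> card F = c"
  then obtain F where "F \<subseteq> V" "acyclic_graph (V - F) E" "card F = c"
    by (auto simp: is_fvs_iff)
  moreover have "card (V - F) = card V - card F"
    using \<open>F \<subseteq> V\<close> \<open>finite V\<close> by (simp add: card_Diff_subset finite_subset)
  ultimately show "card V - card W \<le> c"
    using max[of "V - F"] by auto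
qed

lemma degeneracy_le_if_back_degree_le:
  fixes n :: nat
  assumes "\<And>i. i < n \<Longrightarrow> card {j. j < i \<and> {j, i} \<in> E} \<le> k"
  shows "degeneracy {..<n} E \<le> k"
proof -
  have "is_elim_ordering {..<n} E k [0..<n]"
    using assms by (auto simp: is_elim_ordering_def cong: conj_cong)
  then show ?thesis
    unfolding degeneracy_def by (intro Least_le) blast
qed

lemma eq_bound_if_sum_ge:
  fixes f :: "'a \<Rightarrow> nat"
  assumes "finite A" "\<And>x. x \<in> A \<Longrightarrow> f x \<le> c" "card A * c \<le> sum f A" "a \<in> A"
  shows "f a = c"
proof (rule ccontr)
  assume "f a \<noteq> c"
  with assms(2,4) have "f a < c"
    by (simp add: le_neq_implies_less)
  with assms(2,4) have "sum f A < sum (\<lambda>_. c) A"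
    by (intro sum_strict_mono_ex1[OF assms(1)]) auto
  with assms(3) show False
    by simp
qed

text \<open>Vertex \<open>x\<close> sits at position \<open>x mod K\<close> of block \<open>x div K\<close>; position 0 is the block's hub.
  The relation \<open>block_adj K x y\<close> is only consulted for \<open>x < y\<close>.\<close>

definition block_adj :: "nat \<Rightarrow> nat \<Rightarrow> nat \<Rightarrow> bool" where
  "block_adj K x y \<longleftrightarrow>
     (x div K = y div K \<and> \<not> (x mod K = 0 \<and> y mod K = K - 1)) \<or>
     (x mod K = 0 \<and> y mod K = 0) \<or>
     (x mod K = K - 1 \<and> y mod K = 0)"

definition block_edges :: "nat \<Rightarrow> nat \<Rightarrow> nat set set" where
  "block_edges K n = {{x, y} | x y. x < y \<and> y < n \<and> block_adj K x y}"

lemma block_edges_iff: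
  "{a, b} \<in> block_edges K n \<longleftrightarrow>
     (a < b \<and> b < n \<and> block_adj K a b) \<or> (b < a \<and> a < n \<and> block_adj K b a)"
  unfolding block_edges_def by (auto simp: doubleton_eq_iff)

lemma block_edgesI: "x < y \<Longrightarrow> y < n \<Longrightarrow> block_adj K x y \<Longrightarrow> {x, y} \<in> block_edges K n"
  by (auto simp: block_edges_iff)

lemma block_edge_within_block:
  assumes "r div K = s div K" "r mod K \<noteq> 0 \<or> s mod K \<noteq> K - 1" "r < s" "s < n"
  shows "{r, s} \<in> block_edges K n"
  using assms by (intro block_edgesI) (auto simp: block_adj_def)

lemma block_edge_hubs:
  assumes "0 < K" "i < j" "j * K < n"
  shows "{i * K, j * K} \<in> block_edges K n"
  using assms by (intro block_edgesI) (auto simp: block_adj_def)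

lemma block_edge_last_to_later_hub:
  assumes "1 < K" "i < j" "j * K < n"
  shows "{i * K + (K - 1), j * K} \<in> block_edges K n"
proof (rule block_edgesI)
  have "i * K + K \<le> j * K"
    using assms(2) by (metis add.commute mult_Suc mult_le_mono1 Suc_leI)
  then show "i * K + (K - 1) < j * K"
    using assms(1) by linarith
  have "(i * K + c) mod K = c" if "c < K" for c
    using that by simp
  from this[of "K - 1"] show "block_adj K (i * K + (K - 1)) (j * K)"
    using assms(1) by (simp add: block_adj_def)
qed (use assms in simp)

lemma block_vertex_bounds:
  fixes r K :: nat
  assumes "0 < K" "r mod K \<noteq> 0"
  shows "r div K * K < r" "r \<le> r div K * K + (K - 1)"
    and "r mod K = K - 1 \<longleftrightarrow> r = r div K * K + (K - 1)"
proof -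
  have "r = r div K * K + r mod K"
    by simp
  moreover have "r mod K < K"
    using assms(1) by simp
  ultimately
  show "r div K * K < r" "r \<le> r div K * K + (K - 1)"
      and "r mod K = K - 1 \<longleftrightarrow> r = r div K * K + (K - 1)"
    using assms(2) by linarith+
qed

lemma block_edge_hub_to_block:
  assumes "0 < K" "r mod K \<notin> {0, K - 1}" "r < n"
  shows "{r div K * K, r} \<in> block_edges K n"
  using assms block_vertex_bounds(1)[OF assms(1)] by (intro block_edge_within_block) auto

lemma simple_graph_block_edges: "simple_graph {..<n} (block_edges K n)"
  unfolding simple_graph_def
proof (intro conjI ballI)
  fix e assume "e \<in> block_edges K n"
  then obtain x y where "e = {x, y}" "x < y" "y < n"
    unfolding block_edges_def by blast
  then show "\<exists>u v. u \<noteq> v \<and> u \<in> {..<n} \<and> v \<in> {..<n} \<and> e = {u, v}"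
    by (intro exI[of _ x] exI[of _ y]) auto
qed simp

lemma back_degree_hub_le:
  assumes "0 < K" "i mod K = 0"
  shows "card {j. j < i \<and> {j, i} \<in> block_edges K n} \<le> 2 * (i div K)"
proof -
  let ?b = "i div K"
  have "{j. j < i \<and> {j, i} \<in> block_edges K n}
      \<subseteq> (\<lambda>(c, r). c * K + r) ` ({..<?b} \<times> {0, K - 1})"
  proof
    fix j assume "j \<in> {j. j < i \<and> {j, i} \<in> block_edges K n}"
    then have "j < i" "block_adj K j i"
      by (auto simp: block_edges_iff)
    have "j div K < ?b"
      using \<open>j < i\<close> assms by (metis div_mult_mod_eq add_0_right less_mult_imp_div_less)
    moreover have "j mod K \<in> {0, K - 1}"
      using \<open>block_adj K j i\<close> \<open>j div K < ?b\<close> assms(2) by (auto simp: block_adj_def)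
    ultimately show "j \<in> (\<lambda>(c, r). c * K + r) ` ({..<?b} \<times> {0, K - 1})"
      by (intro image_eqI[of _ _ "(j div K, j mod K)"]) auto
  qed
  then have "card {j. j < i \<and> {j, i} \<in> block_edges K n} \<le> card ({..<?b} \<times> {0, K - 1})"
    by (meson card_image_le card_mono finite_SigmaI finite_imageI finite_insert
        finite_lessThan finite.emptyI order_trans)
  also have "\<dots> \<le> ?b * 2"
    by (simp add: card_cartesian_product card_insert_if)
  finally show ?thesis
    by simp
qed

lemma back_degree_non_hub_le:
  assumes "0 < K" "i mod K \<noteq> 0"
  shows "card {j. j < i \<and> {j, i} \<in> block_edges K n} \<le> K - 2"
proof -
  let ?first = "i div K * K"
  have same_block: "j div K = i div K" "\<not> (j mod K = 0 \<and> i mod K = K - 1)"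
    if "j < i" "{j, i} \<in> block_edges K n" for j
    using that assms(2) by (auto simp: block_edges_iff block_adj_def)
  have first_le: "?first \<le> j" if "j div K = i div K" for j
    using that by (metis div_times_less_eq_dividend)
  have i_eq: "i = ?first + i mod K"
    by simp
  show ?thesis
  proof (cases "i mod K = K - 1")
    case True
    have "{j. j < i \<and> {j, i} \<in> block_edges K n} \<subseteq> {Suc ?first..<i}"
    proof
      fix j assume "j \<in> {j. j < i \<and> {j, i} \<in> block_edges K n}"
      then have "j < i" "j div K = i div K" "j mod K \<noteq> 0"
        using same_block True by auto
      moreover from this have "j \<noteq> ?first"
        by auto
      ultimately show "j \<in> {Suc ?first..<i}"
        using first_le[of j] by simp
    qed
    then have "card {j. j < i \<and> {j, i} \<in> block_edges K n} \<le> card {Suc ?first..<i}"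
      by (intro card_mono) auto
    also have "\<dots> = K - 2"
      using i_eq True by simp
    finally show ?thesis .
  next
    case False
    have "{j. j < i \<and> {j, i} \<in> block_edges K n} \<subseteq> {?first..<i}"
      using same_block first_le by auto
    then have "card {j. j < i \<and> {j, i} \<in> block_edges K n} \<le> card {?first..<i}"
      by (intro card_mono) auto
    also have "\<dots> = i mod K"
      using i_eq by (metis card_atLeastLessThan diff_add_inverse)
    also have "\<dots> \<le> K - 2"
      using False mod_less_divisor[OF assms(1), of i] by linarith
    finally show ?thesis .
  qed
qed

lemma degeneracy_block_graph_le:
  assumes "K = 2 * m + 2"
  shows "degeneracy {..<m * K + 1} (block_edges K (m * K + 1)) \<le> 2 * m"
proof (rule degeneracy_le_if_back_degree_le)
  fix i assume "i < m * K + 1"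
  have "0 < K"
    using assms by simp
  show "card {j. j < i \<and> {j, i} \<in> block_edges K (m * K + 1)} \<le> 2 * m"
  proof (cases "i mod K = 0")
    case True
    have "i div K \<le> m * K div K"
      using \<open>i < m * K + 1\<close> by (intro div_le_mono) simp
    then have "i div K \<le> m"
      using \<open>0 < K\<close> by simp
    then show ?thesis
      using back_degree_hub_le[OF \<open>0 < K\<close> True, of "m * K + 1"] by linarith
  next
    case False
    then show ?thesis
      using back_degree_non_hub_le[OF \<open>0 < K\<close> False] assms by simp
  qed
qed

definition forest_vertices :: "nat \<Rightarrow> nat \<Rightarrow> nat set" where
  "forest_vertices m K = insert (m * K) ((\<lambda>(b, r). b * K + r) ` ({..<m} \<times> {1, 2}))"

lemma mem_forest_vertices_iff:
  assumes "2 < K"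
  shows "w \<in> forest_vertices m K \<longleftrightarrow> w = m * K \<or> (w div K < m \<and> w mod K \<in> {1, 2})"
proof
  assume "w \<in> forest_vertices m K"
  then consider "w = m * K" | b r where "w = b * K + r" "b < m" "r \<in> {1, 2}"
    unfolding forest_vertices_def by auto
  then show "w = m * K \<or> (w div K < m \<and> w mod K \<in> {1, 2})"
  proof cases
    case (2 b r)
    then have "r < K"
      using assms by auto
    with 2 show ?thesis
      by simp
  qed simp
next
  assume "w = m * K \<or> (w div K < m \<and> w mod K \<in> {1, 2})"
  then show "w \<in> forest_vertices m K"
    unfolding forest_vertices_def
  proof (elim disjE conjE)
    assume "w div K < m" "w mod K \<in> {1, 2}"
    then have "w \<in> (\<lambda>(b, r). b * K + r) ` ({..<m} \<times> {1, 2})"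
      by (intro image_eqI[of _ _ "(w div K, w mod K)"]) simp_all
    then show "w \<in> insert (m * K) ((\<lambda>(b, r). b * K + r) ` ({..<m} \<times> {1, 2}))"
      by blast
  qed simp
qed

lemma card_forest_vertices:
  assumes "2 < K"
  shows "card (forest_vertices m K) = 2 * m + 1"
proof -
  have "inj_on (\<lambda>(b, r). b * K + r) ({..<m} \<times> {1, 2})"
  proof (rule inj_onI, clarify)
    fix b r b' r' :: nat
    assume "r \<in> {1, 2}" "r' \<in> {1, 2}" "b * K + r = b' * K + r'"
    moreover from this have "r < K" "r' < K"
      using assms by auto
    ultimately show "b = b' \<and> r = r'"
      by (metis div_mult_self3 div_less mod_mult_self3 mod_less add_0_right not_less0)
  qed
  then have "card ((\<lambda>(b, r). b * K + r) ` ({..<m} \<times> {1, 2})) = 2 * m"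
    by (simp add: card_image card_cartesian_product)
  moreover have "m * K \<notin> (\<lambda>(b, r). b * K + r) ` ({..<m} \<times> {1, 2})"
  proof
    assume "m * K \<in> (\<lambda>(b, r). b * K + r) ` ({..<m} \<times> {1, 2})"
    then obtain b r where "r \<in> {1, 2}" "m * K = b * K + r"
      by auto
    moreover from this have "r < K"
      using assms by auto
    ultimately have "(m * K) mod K = r"
      by simp
    with \<open>r \<in> {1, 2}\<close> show False
      by simp
  qed
  ultimately show ?thesis
    unfolding forest_vertices_def by simp
qed

lemma forest_vertices_subset:
  assumes "2 < K"
  shows "forest_vertices m K \<subseteq> {..<m * K + 1}"
proof
  fix w assume "w \<in> forest_vertices m K"
  then have "w = m * K \<or> w div K < m"
    using assms mem_forest_vertices_iff by blast
  then show "w \<in> {..<m * K + 1}"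
    using assms by (auto simp: div_less_iff_less_mult)
qed

lemma block_adj_forest_vertices:
  assumes "3 < K" "x \<in> forest_vertices m K" "y \<in> forest_vertices m K" "x < y" "block_adj K x y"
  shows "x div K = y div K \<and> {x mod K, y mod K} = {1, 2}"
proof -
  have "2 < K"
    using assms(1) by simp
  have classes: "(w = m * K \<and> w div K = m \<and> w mod K = 0) \<or> (w div K < m \<and> w mod K \<in> {1, 2})"
    if "w \<in> forest_vertices m K" for w
    using that mem_forest_vertices_iff[OF \<open>2 < K\<close>] \<open>2 < K\<close> by auto
  have eq_if: "a = b" if "a div K = b div K" "a mod K = b mod K" for a b
    using that by (metis div_mult_mod_eq)
  have "K - 1 \<notin> {0, 1, 2}"
    using assms(1) by auto
  from assms(5) consider
      "x div K = y div K" "\<not> (x mod K = 0 \<and> y mod K = K - 1)"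
    | "x mod K = 0" "y mod K = 0"
    | "x mod K = K - 1"
    unfolding block_adj_def by argo
  then show ?thesis
  proof cases
    case 1
    then have "x div K < m" "y div K < m" "x mod K \<in> {1, 2}" "y mod K \<in> {1, 2}"
      using classes[OF assms(2)] classes[OF assms(3)] \<open>x < y\<close> by auto
    moreover have "x mod K \<noteq> y mod K"
      using eq_if[OF \<open>x div K = y div K\<close>] \<open>x < y\<close> by auto
    ultimately show ?thesis
      using \<open>x div K = y div K\<close> by auto
  next
    case 2
    then have "x = m * K" "y = m * K"
      using classes[OF assms(2)] classes[OF assms(3)] by auto
    with \<open>x < y\<close> show ?thesis
      by simp
  next
    case 3
    then show ?thesis
      using classes[OF assms(2)] \<open>K - 1 \<notin> {0, 1, 2}\<close> by auto
  qed
qed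

lemma acyclic_forest_vertices:
  assumes "3 < K"
  shows "acyclic_graph (forest_vertices m K) (block_edges K n)"
proof (rule acyclic_graph_if_unique_neighbour)
  have adj: "v div K = a div K \<and> {v mod K, a mod K} = {1, 2}"
    if "v \<in> forest_vertices m K" "a \<in> forest_vertices m K" "{v, a} \<in> block_edges K n" for v a
    using that(3) block_adj_forest_vertices[OF assms that(1,2)] block_adj_forest_vertices[OF assms that(2,1)]
    unfolding block_edges_iff by (auto simp: insert_commute)
  fix v a b
  assume "v \<in> forest_vertices m K" "a \<in> forest_vertices m K" "b \<in> forest_vertices m K"
    and "{v, a} \<in> block_edges K n" "{v, b} \<in> block_edges K n"
  with adj[of v a] adj[of v b]
  have "a div K = b div K" "{v mod K, a mod K} = {v mod K, b mod K}"
    by simp_all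
  then have "a div K = b div K" "a mod K = b mod K"
    by (auto simp: doubleton_eq_iff)
  then show "a = b"
    by (metis div_mult_mod_eq)
qed

lemma not_acyclic_hub_two_block_vertices:
  assumes "0 < K" "r div K * K \<in> S" "r \<in> S" "s \<in> S" "r < s" "s < n" "r div K = s div K"
    and "r mod K \<notin> {0, K - 1}" "s mod K \<notin> {0, K - 1}"
  shows "\<not> acyclic_graph S (block_edges K n)"
proof -
  let ?x = "r div K * K"
  have "r < n" "r mod K \<noteq> 0"
    using assms(5,6,8) by auto
  then have "?x < r" "{?x, r} \<in> block_edges K n"
    using block_vertex_bounds(1)[OF assms(1)] block_edge_hub_to_block[OF assms(1,8)] by simp_all
  moreover have "{s, ?x} \<in> block_edges K n"
    using block_edge_hub_to_block[OF assms(1,9,6)] assms(7) by (simp add: insert_commute)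
  moreover have "{r, s} \<in> block_edges K n"
    using assms by (intro block_edge_within_block) auto
  ultimately have "is_cycle S (block_edges K n) [?x, r, s]"
    using assms(2-5) by (intro is_cycle_triangle) auto
  then show ?thesis
    unfolding acyclic_graph_def by blast
qed

lemma not_acyclic_two_hubs_block_vertex_last:
  assumes "1 < K" "i < j" "j * K < n"
    and "i * K \<in> S" "j * K \<in> S" "r \<in> S" "i * K + (K - 1) \<in> S"
    and "r div K = i" "r mod K \<notin> {0, K - 1}"
  shows "\<not> acyclic_graph S (block_edges K n)"
proof -
  let ?x = "i * K" and ?y = "j * K" and ?u = "i * K + (K - 1)"
  have "0 < K"
    using assms(1) by simp
  have "?u div K = i"
  proof -
    have "(i * K + c) div K = i" if "c < K" for c
      using that by simp
    from this[of "K - 1"] show ?thesis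
      using assms(1) by simp
  qed
  have "?x + K \<le> ?y"
    using assms(2) by (metis add.commute mult_Suc mult_le_mono1 Suc_leI)
  then have "?u < ?y"
    using assms(1) by linarith
  moreover have "?x < r" "r < ?u"
    using block_vertex_bounds[OF \<open>0 < K\<close>, where r = r] assms(8,9) by auto
  ultimately have "distinct [?x, r, ?u, ?y]"
    by auto
  moreover have "{?x, r, ?u, ?y} \<subseteq> S"
    using assms(4-7) by simp
  moreover have "{?x, r} \<in> block_edges K n"
    using block_edge_hub_to_block[OF \<open>0 < K\<close>, where r = r] assms(3,8,9) \<open>r < ?u\<close> \<open>?u < ?y\<close>
    by simp
  moreover have "{r, ?u} \<in> block_edges K n"
    using \<open>?u div K = i\<close> \<open>r < ?u\<close> \<open>?u < ?y\<close> assms(3,8,9) by (intro block_edge_within_block) auto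
  moreover have "{?y, ?x} \<in> block_edges K n"
    using block_edge_hubs[OF \<open>0 < K\<close> assms(2,3)] by (simp add: insert_commute)
  ultimately have "is_cycle S (block_edges K n) [?x, r, ?u, ?y]"
    using block_edge_last_to_later_hub[OF assms(1-3)] by (intro is_cycle_square)
  then show ?thesis
    unfolding acyclic_graph_def by blast
qed

lemma not_acyclic_two_hubs_two_block_vertices:
  assumes "1 < K" "i < j" "j * K < n"
    and "i * K \<in> S" "j * K \<in> S" "p \<in> S" "q \<in> S" "p \<noteq> q"
    and "p div K = i" "q div K = i" "p mod K \<noteq> 0" "q mod K \<noteq> 0"
  shows "\<not> acyclic_graph S (block_edges K n)"
proof -
  let ?u = "i * K + (K - 1)"
  have "0 < K"
    using assms(1) by simp
  have "i * K + K \<le> j * K"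
    using assms(2) by (metis add.commute mult_Suc mult_le_mono1 Suc_leI)
  then have in_block: "r < n" "r mod K = K - 1 \<longleftrightarrow> r = ?u"
    if "r div K = i" "r mod K \<noteq> 0" for r
    using block_vertex_bounds[OF \<open>0 < K\<close> that(2)] that(1) assms(1,3) by auto
  show ?thesis
  proof (cases "p \<noteq> ?u \<and> q \<noteq> ?u")
    case True
    show ?thesis
    proof (cases "p < q")
      case True
      with \<open>p \<noteq> ?u \<and> q \<noteq> ?u\<close> show ?thesis
        using in_block[OF assms(9,11)] in_block[OF assms(10,12)] assms(4,6,7,9-12)
        by (intro not_acyclic_hub_two_block_vertices[OF \<open>0 < K\<close>, where r = p and s = q]) auto
    next
      case False
      with \<open>p \<noteq> ?u \<and> q \<noteq> ?u\<close> assms(8) show ?thesis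
        using in_block[OF assms(9,11)] in_block[OF assms(10,12)] assms(4,6,7,9-12)
        by (intro not_acyclic_hub_two_block_vertices[OF \<open>0 < K\<close>, where r = q and s = p]) auto
    qed
  next
    case False
    then obtain r where "r \<in> S" "r div K = i" "r mod K \<notin> {0, K - 1}" "?u \<in> S"
      using in_block[OF assms(9,11)] in_block[OF assms(10,12)] assms(6-12) by auto
    then show ?thesis
      using not_acyclic_two_hubs_block_vertex_last[OF assms(1-5)] by blast
  qed
qed

lemma card_eq_hubs_plus_blocks:
  fixes K m :: nat
  assumes "0 < K" "S \<subseteq> {..<m * K + 1}"
  shows "card S = card {x \<in> S. x mod K = 0} + (\<Sum>b<m. card {x \<in> S. x mod K \<noteq> 0 \<and> x div K = b})"
proof -
  have "finite S"
    using assms(2) by (rule finite_subset) simp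
  have "{x \<in> S. x mod K \<noteq> 0} = (\<Union>b<m. {x \<in> S. x mod K \<noteq> 0 \<and> x div K = b})"
  proof (intro equalityI subsetI)
    fix x assume x: "x \<in> {x \<in> S. x mod K \<noteq> 0}"
    then have "x \<noteq> m * K" "x \<le> m * K"
      using assms(2) by auto
    then have "x div K < m"
      using assms(1) by (simp add: div_less_iff_less_mult)
    with x show "x \<in> (\<Union>b<m. {x \<in> S. x mod K \<noteq> 0 \<and> x div K = b})"
      by blast
  qed auto
  then have "card {x \<in> S. x mod K \<noteq> 0} = (\<Sum>b<m. card {x \<in> S. x mod K \<noteq> 0 \<and> x div K = b})"
    using \<open>finite S\<close> by (simp only:) (intro card_UN_disjoint; auto)
  moreover have "card S = card {x \<in> S. x mod K = 0} + card {x \<in> S. x mod K \<noteq> 0}"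
    using \<open>finite S\<close> by (subst card_Un_disjoint[symmetric]) (auto intro: arg_cong[where f = card])
  ultimately show ?thesis
    by simp
qed

lemma card_hubs_le_2_if_acyclic:
  assumes "S \<subseteq> {..<n}" "acyclic_graph S (block_edges K n)"
  shows "card {x \<in> S. x mod K = 0} \<le> 2"
proof (rule card_clique_le_2_if_acyclic[OF assms(2)])
  fix a b assume "a \<in> {x \<in> S. x mod K = 0}" "b \<in> {x \<in> S. x mod K = 0}" "a \<noteq> b"
  with assms(1) show "{a, b} \<in> block_edges K n"
    by (cases "a < b") (auto simp: block_edges_iff block_adj_def)
qed auto

lemma card_block_le_2_if_acyclic:
  assumes "S \<subseteq> {..<n}" "acyclic_graph S (block_edges K n)"
  shows "card {x \<in> S. x mod K \<noteq> 0 \<and> x div K = b} \<le> 2"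
proof (rule card_clique_le_2_if_acyclic[OF assms(2)])
  fix x y assume "x \<in> {x \<in> S. x mod K \<noteq> 0 \<and> x div K = b}" "y \<in> {x \<in> S. x mod K \<noteq> 0 \<and> x div K = b}"
    "x \<noteq> y"
  with assms(1) show "{x, y} \<in> block_edges K n"
    by (cases "x < y") (auto simp: block_edges_iff block_adj_def)
qed auto

lemma card_le_if_acyclic_block_subgraph:
  assumes "1 < K" "S \<subseteq> {..<m * K + 1}" and acyclic: "acyclic_graph S (block_edges K (m * K + 1))"
  shows "card S \<le> 2 * m + 1"
proof (rule ccontr)
  let ?n = "m * K + 1"
  let ?H = "{x \<in> S. x mod K = 0}" and ?Q = "\<lambda>b. {x \<in> S. x mod K \<noteq> 0 \<and> x div K = b}"
  assume "\<not> card S \<le> 2 * m + 1"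
  have card_Q: "card (?Q b) \<le> 2" for b
    using card_block_le_2_if_acyclic[OF assms(2,3)] .
  then have "(\<Sum>b<m. card (?Q b)) \<le> 2 * m"
    using sum_bounded_above[of "{..<m}" "\<lambda>b. card (?Q b)" 2] by (simp add: mult.commute)
  moreover have "card S = card ?H + (\<Sum>b<m. card (?Q b))"
    using card_eq_hubs_plus_blocks assms(1,2) by simp
  ultimately have "card ?H = 2" and sum_Q: "(\<Sum>b<m. card (?Q b)) = 2 * m"
    using card_hubs_le_2_if_acyclic[OF assms(2,3)] \<open>\<not> card S \<le> 2 * m + 1\<close> by linarith+
  obtain x y where "?H = {x, y}" "x < y"
  proof -
    obtain a b where "?H = {a, b}" "a \<noteq> b"
      using \<open>card ?H = 2\<close> by (meson card_2_iff)
    then show thesis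
      using that[of a b] that[of b a] by (cases "a < b") (auto simp: insert_commute)
  qed
  define i where "i = x div K"
  define j where "j = y div K"
  have "x \<in> ?H" "y \<in> ?H"
    using \<open>?H = {x, y}\<close> by auto
  then have "x = i * K" "y = j * K" "x \<in> S" "y \<in> S"
    using div_mult_mod_eq[of x K] div_mult_mod_eq[of y K] unfolding i_def j_def by auto
  then have "i < j" "j * K < ?n"
    using \<open>x < y\<close> assms(2) by auto
  then have "j * K \<le> m * K"
    by linarith
  with \<open>i < j\<close> assms(1) have "i < m"
    by simp
  with card_Q sum_Q have "card (?Q i) = 2"
    by (intro eq_bound_if_sum_ge[of "{..<m}"]) simp_all
  then obtain p q where "?Q i = {p, q}" "p \<noteq> q"
    by (meson card_2_iff)
  then have "p \<in> ?Q i" "q \<in> ?Q i"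
    by auto
  then have "\<not> acyclic_graph S (block_edges K ?n)"
    using \<open>x = i * K\<close> \<open>y = j * K\<close> \<open>x \<in> S\<close> \<open>y \<in> S\<close> \<open>p \<noteq> q\<close>
    by (intro not_acyclic_two_hubs_two_block_vertices[OF assms(1) \<open>i < j\<close> \<open>j * K < ?n\<close>]) auto
  with acyclic show False
    by contradiction
qed

theorem mainTheorem4:
  fixes k :: nat
  assumes "even k" and "k \<ge> 2"
  shows "\<exists>(V :: nat set) (E :: nat set set).
           simple_graph V E \<and>
           degeneracy V E \<le> k \<and>
           card V = (k + 2) * k div 2 + 1 \<and>
           fvs_number V E = k ^ 2 div 2"
proof -
  obtain m where k: "k = 2 * m"
    using \<open>even k\<close> by (auto elim: evenE)
  define K where "K = 2 * m + 2"
  define V where "V = {..<m * K + 1}"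
  define E where "E = block_edges K (m * K + 1)"
  have "3 < K"
    using \<open>k \<ge> 2\<close> k unfolding K_def by simp
  have "degeneracy V E \<le> k"
    using degeneracy_block_graph_le[OF K_def] k unfolding V_def E_def by simp
  have "card S \<le> card (forest_vertices m K)" if "S \<subseteq> V" "acyclic_graph S E" for S
    using card_le_if_acyclic_block_subgraph[of K S m] card_forest_vertices[of K m] that \<open>3 < K\<close>
    unfolding V_def E_def by simp
  then have "fvs_number V E = card V - card (forest_vertices m K)"
    using forest_vertices_subset[of K m] acyclic_forest_vertices[OF \<open>3 < K\<close>] \<open>3 < K\<close>
    unfolding V_def E_def by (intro fvs_number_eq_card_minus_max_forest) simp_all
  also have "\<dots> = k ^ 2 div 2"
    using \<open>3 < K\<close> card_forest_vertices unfolding V_def K_def k by (simp add: power2_eq_square algebra_simps)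
  finally have "fvs_number V E = k ^ 2 div 2" .
  moreover have "card V = (k + 2) * k div 2 + 1"
    unfolding V_def K_def k by (simp add: algebra_simps)
  ultimately show ?thesis
    using simple_graph_block_edges \<open>degeneracy V E \<le> k\<close> unfolding E_def V_def by blast
qed

end
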